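(* Let $\mathbb{F}$ be a field, let $V$ be an infinite-dimensional vector space over $\mathbb{F}$, and let $p_1,p_2,p_3\in\mathbb{F}[t]$ be split polynomials of degree $2$. Let $u$ be an endomorphism of $V$ with a dominant eigenvalue $\lambda$, and assume that $u$ is a $(p_1,p_2,p_3)$-sum. Then $\lambda$ is a $(p_1,p_2,p_3)$-sum (as a scalar) or $2\lambda=\operatorname{tr}p_1+\operatorname{tr}p_2+\operatorname{tr}p_3$.
   Context: A scalar $\lambda$ is a dominant eigenvalue of $u\in\mathrm{End}(V)$ if $\operatorname{rk}(u-\lambda\,\mathrm{id}_V)<\dim V$. An endomorphism $u$ is a $(p_1,p_2,p_3)$-sum if $u=u_1+u_2+u_3$ for some endomorphisms $u_k$ of $V$ with $p_k(u_k)=0$ for all $k$. A scalar $\lambda$ is a $(p_1,p_2,p_3)$-sum if $\lambda=x_1+x_2+x_3$ for some $x_1,x_2,x_3\in\mathbb{F}$ with $p_k(x_k)=0$ for all $k$. The trace of a monic polynomial of degree $n>0$ is the opposite of its coefficient on $t^{n-1}$; the trace $\operatorname{tr}p$ of a nonconstant polynomial $p$ with leading coefficient $\alpha$ is the trace of $\alpha^{-1}p$. *)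

theory Defs
  imports Main "HOL-Computational_Algebra.Polynomial"
begin

text \<open>A vector space V over a field 'a is modelled as a type 'v (additive group)
  with a scalar multiplication scale satisfying the locale vector_space.
  Endomorphisms are linear maps 'v to 'v.\<close>

definition is_basis_of :: "('a::field \<Rightarrow> 'v::ab_group_add \<Rightarrow> 'v) \<Rightarrow> 'v set \<Rightarrow> 'v set \<Rightarrow> bool" where
  "is_basis_of scale S B \<longleftrightarrow> B \<subseteq> S \<and> \<not> module.dependent scale B \<and> module.span scale B = S"

definition infinite_dimensional :: "('a::field \<Rightarrow> 'v::ab_group_add \<Rightarrow> 'v) \<Rightarrow> bool" where
  "infinite_dimensional scale \<longleftrightarrow> \<not> (\<exists>B. finite B \<and> module.span scale B = UNIV)"

text \<open>rk(u - lambda id) < dim V, as a comparison of cardinals (cardinalities of bases).\<close>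
definition dominant_eigenvalue :: "('a::field \<Rightarrow> 'v::ab_group_add \<Rightarrow> 'v) \<Rightarrow> ('v \<Rightarrow> 'v) \<Rightarrow> 'a \<Rightarrow> bool" where
  "dominant_eigenvalue scale u lam \<longleftrightarrow>
     (\<exists>B C. is_basis_of scale UNIV B \<and>
            is_basis_of scale (range (\<lambda>x. u x - scale lam x)) C \<and>
            ordLess2 (card_of C) (card_of B))"

definition poly_endo :: "('a::field \<Rightarrow> 'v::ab_group_add \<Rightarrow> 'v) \<Rightarrow> 'a poly \<Rightarrow> ('v \<Rightarrow> 'v) \<Rightarrow> 'v \<Rightarrow> 'v" where
  "poly_endo scale p u x = (\<Sum>i\<le>degree p. scale (coeff p i) ((u ^^ i) x))"

definition annihilates :: "('a::field \<Rightarrow> 'v::ab_group_add \<Rightarrow> 'v) \<Rightarrow> 'a poly \<Rightarrow> ('v \<Rightarrow> 'v) \<Rightarrow> bool" where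
  "annihilates scale p u \<longleftrightarrow> (\<forall>x. poly_endo scale p u x = 0)"

definition is_sum3 :: "('a::field \<Rightarrow> 'v::ab_group_add \<Rightarrow> 'v) \<Rightarrow> 'a poly \<Rightarrow> 'a poly \<Rightarrow> 'a poly \<Rightarrow> ('v \<Rightarrow> 'v) \<Rightarrow> bool" where
  "is_sum3 scale p1 p2 p3 u \<longleftrightarrow>
     (\<exists>u1 u2 u3. Vector_Spaces.linear scale scale u1 \<and> Vector_Spaces.linear scale scale u2 \<and>
        Vector_Spaces.linear scale scale u3 \<and>
        annihilates scale p1 u1 \<and> annihilates scale p2 u2 \<and> annihilates scale p3 u3 \<and>
        (\<forall>x. u x = u1 x + u2 x + u3 x))"

definition scalar_sum3 :: "'a::field poly \<Rightarrow> 'a poly \<Rightarrow> 'a poly \<Rightarrow> 'a \<Rightarrow> bool" where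
  "scalar_sum3 p1 p2 p3 lam \<longleftrightarrow>
     (\<exists>x1 x2 x3. poly p1 x1 = 0 \<and> poly p2 x2 = 0 \<and> poly p3 x3 = 0 \<and> lam = x1 + x2 + x3)"

definition split_poly :: "'a::field poly \<Rightarrow> bool" where
  "split_poly p \<longleftrightarrow> p \<noteq> 0 \<and> (\<exists>rs. p = smult (lead_coeff p) (\<Prod>r\<leftarrow>rs. [:-r, 1:]))"

definition tr_poly :: "'a::field poly \<Rightarrow> 'a" where
  "tr_poly p = - coeff p (degree p - 1) / lead_coeff p"

end

theory Submission
  imports Defs
begin

text \<open>
  Work modulo the two-sided ideal of endomorphisms whose range is spanned by fewer vectors
  than a basis has; the identity is not in it because \<open>V\<close> is infinite-dimensional, while
  \<open>u - \<lambda>\<close> is. If \<open>p\<^sub>k = (t - \<alpha>\<^sub>k)(t - \<beta>\<^sub>k)\<close>, then \<open>e\<^sub>k = u\<^sub>k - \<alpha>\<^sub>k\<close> satisfies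
  \<open>e\<^sub>k\<^sup>2 = \<delta>\<^sub>k e\<^sub>k\<close> with \<open>\<delta>\<^sub>k = \<beta>\<^sub>k - \<alpha>\<^sub>k\<close>, and \<open>e\<^sub>1 + e\<^sub>2 + e\<^sub>3 \<equiv> \<mu>\<close> modulo the ideal, where
  \<open>\<mu> = \<lambda> - \<alpha>\<^sub>1 - \<alpha>\<^sub>2 - \<alpha>\<^sub>3\<close>. Eliminating \<open>e\<^sub>3\<close> gives a congruence
  \<open>e\<^sub>1e\<^sub>2 + e\<^sub>2e\<^sub>1 + a e\<^sub>1 + b e\<^sub>2 + P \<equiv> 0\<close>; bracketing it with \<open>e\<^sub>1\<close> shows that \<open>e\<^sub>1\<close> and \<open>e\<^sub>2\<close>
  commute modulo the ideal unless \<open>2\<mu> = \<delta>\<^sub>1 + \<delta>\<^sub>2 + \<delta>\<^sub>3\<close>. Then \<open>e\<^sub>1\<close> can be eliminated too,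
  leaving \<open>K e\<^sub>2 + L \<equiv> 0\<close>, which forces the scalar \<open>L (K \<delta>\<^sub>2 + L)\<close> to vanish. This scalar
  factors as \<open>g(0) g(\<delta>\<^sub>1) g(\<delta>\<^sub>2) g(\<delta>\<^sub>1 + \<delta>\<^sub>2)\<close> with \<open>g(t) = (\<mu> - t)(\<mu> - t - \<delta>\<^sub>3)\<close>, and each
  root of \<open>g\<close> exhibits \<open>\<lambda>\<close> as a sum of roots of \<open>p\<^sub>1, p\<^sub>2, p\<^sub>3\<close>.
\<close>

unbundle cardinal_syntax

lemma degree_prod_linear_factors: "degree (\<Prod>r\<leftarrow>rs. [:-r, 1::'a::field:]) = length rs"
proof (induction rs)
  case (Cons r rs)
  have "(\<Prod>r\<leftarrow>rs. [:-r, 1::'a:]) \<noteq> 0" by (auto simp: prod_list_zero_iff)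
  then have "degree ([:-r, 1:] * (\<Prod>r\<leftarrow>rs. [:-r, 1::'a:]))
      = degree [:-r, 1::'a:] + degree (\<Prod>r\<leftarrow>rs. [:-r, 1::'a:])"
    by (intro degree_mult_eq) auto
  then show ?case using Cons by simp
qed simp

lemma split_poly_degree_2_obtain:
  fixes p :: "'a::field poly"
  assumes "split_poly p" "degree p = 2"
  obtains c \<alpha> \<beta> where "c \<noteq> 0" "p = smult c ([:-\<alpha>, 1:] * [:-\<beta>, 1:])"
proof -
  from assms(1) obtain rs where p0: "p \<noteq> 0" and p: "p = smult (lead_coeff p) (\<Prod>r\<leftarrow>rs. [:-r, 1:])"
    unfolding split_poly_def by blast
  have "length rs = 2"
    using assms(2) p p0 degree_prod_linear_factors[of rs] by (metis degree_smult_eq leading_coeff_0_iff)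
  then obtain \<alpha> \<beta> where "rs = [\<alpha>, \<beta>]"
    by (metis (no_types, lifting) One_nat_def Suc_1 length_0_conv length_Suc_conv)
  with p p0 show ?thesis using that[of "lead_coeff p" \<alpha> \<beta>] by simp
qed

lemma coeff_quadratic:
  fixes c \<alpha> \<beta> :: "'a::field"
  assumes "c \<noteq> 0"
  shows "degree (smult c ([:-\<alpha>, 1:] * [:-\<beta>, 1:])) = 2"
    "coeff (smult c ([:-\<alpha>, 1:] * [:-\<beta>, 1:])) 0 = c * (\<alpha> * \<beta>)"
    "coeff (smult c ([:-\<alpha>, 1:] * [:-\<beta>, 1:])) 1 = - c * (\<alpha> + \<beta>)"
    "coeff (smult c ([:-\<alpha>, 1:] * [:-\<beta>, 1:])) 2 = c"
  using assms by (simp_all add: numeral_2_eq_2 algebra_simps)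

lemma poly_quadratic_eq_0_iff:
  fixes c \<alpha> \<beta> :: "'a::field"
  assumes "c \<noteq> 0"
  shows "poly (smult c ([:-\<alpha>, 1:] * [:-\<beta>, 1:])) x = 0 \<longleftrightarrow> x = \<alpha> \<or> x = \<beta>"
proof -
  have "poly (smult c ([:-\<alpha>, 1:] * [:-\<beta>, 1:])) x = c * ((x - \<alpha>) * (x - \<beta>))"
    by (simp add: algebra_simps)
  with assms show ?thesis by simp
qed

lemma tr_poly_quadratic:
  fixes c \<alpha> \<beta> :: "'a::field"
  assumes "c \<noteq> 0"
  shows "tr_poly (smult c ([:-\<alpha>, 1:] * [:-\<beta>, 1:])) = \<alpha> + \<beta>"
  using assms unfolding tr_poly_def by (simp add: coeff_quadratic)

context vector_space
begin

lemma in_span_finite_subset: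
  assumes "x \<in> span S"
  obtains T where "finite T" "T \<subseteq> S" "x \<in> span T"
proof -
  from assms obtain T r where "finite T" "T \<subseteq> S" and x: "x = (\<Sum>a\<in>T. r a *s a)"
    unfolding span_explicit by blast
  moreover have "x \<in> span T" unfolding x by (intro span_sum span_scale span_base)
  ultimately show ?thesis using that by blast
qed

lemma basis_card_of_ordLeq_infinite_spanning:
  assumes ind: "independent B" and spB: "span B = UNIV"
    and inf: "infinite D" and sub: "B \<subseteq> span D"
  shows "|B| \<le>o |D|"
proof -
  have "\<forall>d. \<exists>G. finite G \<and> G \<subseteq> B \<and> d \<in> span G"
    using in_span_finite_subset[of _ B] spB by (metis UNIV_I)
  then obtain G where G: "\<And>d. finite (G d) \<and> G d \<subseteq> B \<and> d \<in> span (G d)"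
    by metis
  define B' where "B' = (\<Union>d\<in>D. G d)"
  have "B' \<subseteq> B" using G unfolding B'_def by blast
  have "D \<subseteq> span B'"
    using G span_mono[of _ B'] unfolding B'_def by blast
  then have "B \<subseteq> span B'" using sub span_mono span_span by blast
  have "B \<subseteq> B'"
  proof
    fix b assume b: "b \<in> B"
    show "b \<in> B'"
    proof (rule ccontr)
      assume "b \<notin> B'"
      then have "b \<in> span (B - {b})"
        using b \<open>B' \<subseteq> B\<close> \<open>B \<subseteq> span B'\<close> span_mono[of B' "B - {b}"] by blast
      with b ind show False unfolding dependent_def by blast
    qed
  qed
  moreover have "|B'| \<le>o |D|" unfolding B'_def
    by (rule card_of_UNION_ordLeq_infinite[OF inf ordLeq_refl[OF card_of_Card_order]])
       (use G inf ordLeq3_finite_infinite in blast)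
  ultimately show ?thesis using \<open>B' \<subseteq> B\<close> by simp
qed

lemma linear_endo_simps:
  assumes "Vector_Spaces.linear scale scale f"
  shows "f (x + y) = f x + f y" "f (c *s x) = c *s f x" "f (x - y) = f x - f y"
    "f (- x) = - f x" "f 0 = 0"
proof -
  interpret module_hom scale scale f using assms module_hom_iff_linear by blast
  show "f (x + y) = f x + f y" "f (c *s x) = c *s f x" "f (x - y) = f x - f y"
    "f (- x) = - f x" "f 0 = 0"
    by (simp_all add: add scale diff neg)
qed

lemma linear_minus_scale:
  assumes "Vector_Spaces.linear scale scale f"
  shows "Vector_Spaces.linear scale scale (\<lambda>x. f x - c *s x)"
  unfolding Vector_Spaces.linear_iff
  by (simp add: vector_space_axioms linear_endo_simps[OF assms] algebra_simps)

lemma quadratic_relation_shift: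
  assumes lin: "Vector_Spaces.linear scale scale f"
    and rel: "\<And>x. f (f x) = (\<alpha> + \<beta>) *s f x - (\<alpha> * \<beta>) *s x"
  shows "f (f x - \<alpha> *s x) - \<alpha> *s (f x - \<alpha> *s x) = (\<beta> - \<alpha>) *s (f x - \<alpha> *s x)"
  by (simp add: linear_endo_simps[OF lin] rel algebra_simps)

lemma scale_times_two: "(c * 2) *s x = c *s x + c *s x" "(2 * c) *s x = c *s x + c *s x"
  by (metis mult_2_right scale_left_distrib, metis mult_2 scale_left_distrib)

lemma split_quadratic_annihilator:
  assumes "split_poly p" "degree p = 2"
    and lin: "Vector_Spaces.linear scale scale f" and ann: "annihilates scale p f"
  obtains \<alpha> \<beta> where "\<And>x. poly p x = 0 \<longleftrightarrow> x = \<alpha> \<or> x = \<beta>" "tr_poly p = \<alpha> + \<beta>"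
    "\<And>x. f (f x) = (\<alpha> + \<beta>) *s f x - (\<alpha> * \<beta>) *s x"
proof -
  obtain c \<alpha> \<beta> where c: "c \<noteq> 0" and p: "p = smult c ([:-\<alpha>, 1:] * [:-\<beta>, 1:])"
    using split_poly_degree_2_obtain[OF assms(1,2)] .
  have "f (f x) = (\<alpha> + \<beta>) *s f x - (\<alpha> * \<beta>) *s x" for x
  proof -
    have "(c * (\<alpha> * \<beta>)) *s x + (- c * (\<alpha> + \<beta>)) *s f x + c *s f (f x) = 0"
      using ann c unfolding annihilates_def poly_endo_def p coeff_quadratic[OF c]
      by (simp add: numeral_2_eq_2 atMost_Suc algebra_simps)
    then have "inverse c *s ((c * (\<alpha> * \<beta>)) *s x + (- c * (\<alpha> + \<beta>)) *s f x + c *s f (f x)) = 0"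
      by simp
    with c show ?thesis by (simp add: algebra_simps eq_neg_iff_add_eq_0 eq_diff_eq)
  qed
  then show ?thesis
    using that poly_quadratic_eq_0_iff[OF c] tr_poly_quadratic[OF c] unfolding p by blast
qed

end

lemma quasi_idempotent_sum_scalar_roots:
  fixes \<mu> d1 d2 d3 :: "'a::field"
  defines "a \<equiv> d1 - (2 * \<mu> - d3)" and "b \<equiv> d2 - (2 * \<mu> - d3)" and "P \<equiv> \<mu> * (\<mu> - d3)"
  assumes "P * (d1 * a + P) * ((b * (d1 + d1 + b) * d2 + b * (d1 * a + P) + P * (d1 + d1 + b)) * d2
             + P * (d1 * a + P)) = 0"
  shows "\<exists>x\<in>{0, d1}. \<exists>y\<in>{0, d2}. \<exists>z\<in>{0, d3}. \<mu> = x + y + z"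
proof -
  define g where "g t = (\<mu> - t) * (\<mu> - t - d3)" for t
  have "g 0 * g d1 * g d2 * g (d1 + d2) = 0"
    using assms(4) unfolding g_def a_def b_def P_def by algebra
  then obtain x y where xy: "x \<in> {0, d1}" "y \<in> {0, d2}" and "g (x + y) = 0"
    by (metis add_0 add_0_right insertCI mult_eq_0_iff)
  then have "\<mu> = x + y + 0 \<or> \<mu> = x + y + d3"
    unfolding g_def mult_eq_0_iff by (auto simp: algebra_simps)
  with xy show ?thesis by blast
qed

locale vector_space_infinite_basis = vector_space scale
  for scale :: "'a::field \<Rightarrow> 'v::ab_group_add \<Rightarrow> 'v" (infixr \<open>*s\<close> 75) +
  fixes B0 :: "'v set"
  assumes independent_B0: "independent B0" and span_B0: "span B0 = UNIV"
    and not_finite_span_UNIV: "\<And>B. finite B \<Longrightarrow> span B \<noteq> UNIV"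
begin

definition small_rank :: "('v \<Rightarrow> 'v) \<Rightarrow> bool" where
  "small_rank f \<longleftrightarrow> (\<exists>D. |D| <o |B0| \<and> range f \<subseteq> span D)"

lemma infinite_B0: "infinite B0"
  using not_finite_span_UNIV span_B0 by blast

lemma small_rank_add:
  assumes "small_rank f" "small_rank g"
  shows "small_rank (\<lambda>v. f v + g v)"
proof -
  obtain D1 D2 where D: "|D1| <o |B0|" "range f \<subseteq> span D1" "|D2| <o |B0|" "range g \<subseteq> span D2"
    using assms unfolding small_rank_def by blast
  have "|D1 \<union> D2| <o |B0|" using card_of_Un_ordLess_infinite infinite_B0 D by blast
  moreover have "range (\<lambda>v. f v + g v) \<subseteq> span (D1 \<union> D2)"
    using D span_mono[of D1 "D1 \<union> D2"] span_mono[of D2 "D1 \<union> D2"] by (auto intro!: span_add)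
  ultimately show ?thesis unfolding small_rank_def by blast
qed

lemma small_rank_scale: "small_rank f \<Longrightarrow> small_rank (\<lambda>v. c *s f v)"
  unfolding small_rank_def by (auto intro: span_scale)

lemma small_rank_neg: "small_rank f \<Longrightarrow> small_rank (\<lambda>v. - f v)"
  using small_rank_scale[of f "-1"] by simp

lemma small_rank_diff: "small_rank f \<Longrightarrow> small_rank g \<Longrightarrow> small_rank (\<lambda>v. f v - g v)"
  using small_rank_add[of f "\<lambda>v. - g v"] small_rank_neg[of g] by simp

lemma small_rank_comp_right: "small_rank f \<Longrightarrow> small_rank (\<lambda>v. f (h v))"
  unfolding small_rank_def by blast

lemma small_rank_comp_left:
  assumes h: "Vector_Spaces.linear scale scale h" and f: "small_rank f"
  shows "small_rank (\<lambda>v. h (f v))"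
proof -
  obtain D where D: "|D| <o |B0|" "range f \<subseteq> span D"
    using f unfolding small_rank_def by blast
  have "|h ` D| <o |B0|" using card_of_image ordLeq_ordLess_trans D(1) by blast
  moreover have "range (\<lambda>v. h (f v)) \<subseteq> span (h ` D)"
    using module_hom.span_image[of scale scale h D] h D(2) module_hom_iff_linear by auto
  ultimately show ?thesis unfolding small_rank_def by blast
qed

lemma small_rank_cong: "small_rank f \<Longrightarrow> (\<And>v. g v = f v) \<Longrightarrow> small_rank g"
  by (metis ext)

lemma not_small_rank_scale_id:
  assumes "c \<noteq> 0"
  shows "\<not> small_rank (\<lambda>v. c *s v)"
proof
  assume "small_rank (\<lambda>v. c *s v)"
  then have "small_rank (\<lambda>v. inverse c *s c *s v)" by (rule small_rank_scale)
  then obtain D where D: "|D| <o |B0|" "span D = UNIV"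
    using assms unfolding small_rank_def by auto
  have "|B0| \<le>o |D|"
    using basis_card_of_ordLeq_infinite_spanning[OF independent_B0 span_B0] D(2)
      not_finite_span_UNIV by blast
  with D(1) show False using not_ordLess_ordLeq by blast
qed

text \<open>Multiplying \<open>K e + L\<close> by \<open>K \<delta> + L - K e\<close> kills \<open>e\<close>.\<close>
lemma quasi_idempotent_relation_scalar:
  assumes lin: "Vector_Spaces.linear scale scale e" and quasi_idem: "\<And>x. e (e x) = \<delta> *s e x"
    and rel: "small_rank (\<lambda>v. K *s e v + L *s v)"
  shows "L * (K * \<delta> + L) = 0"
proof -
  have "small_rank (\<lambda>v. (K * \<delta> + L) *s (K *s e v + L *s v) - K *s e (K *s e v + L *s v))"
    by (intro small_rank_diff small_rank_scale small_rank_comp_left[OF lin] rel)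
  then have "small_rank (\<lambda>v. (L * (K * \<delta> + L)) *s v)"
    by (rule small_rank_cong) (simp add: linear_endo_simps[OF lin] quasi_idem algebra_simps)
  then show ?thesis using not_small_rank_scale_id by blast
qed

lemma small_rank_eliminate_third:
  assumes lin_e1: "Vector_Spaces.linear scale scale e1" and lin_e2: "Vector_Spaces.linear scale scale e2"
    and lin_e3: "Vector_Spaces.linear scale scale e3" and lin_w: "Vector_Spaces.linear scale scale w"
    and quasi_idem_e1: "\<And>x. e1 (e1 x) = d1 *s e1 x"
    and quasi_idem_e2: "\<And>x. e2 (e2 x) = d2 *s e2 x"
    and quasi_idem_e3: "\<And>x. e3 (e3 x) = d3 *s e3 x"
    and sum: "\<And>v. e1 v + e2 v + e3 v = \<mu> *s v + w v" and small_w: "small_rank w"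
  shows "small_rank (\<lambda>v. e1 (e2 v) + e2 (e1 v) + (d1 - (2 * \<mu> - d3)) *s e1 v
            + (d2 - (2 * \<mu> - d3)) *s e2 v + (\<mu> * (\<mu> - d3)) *s v)"
proof -
  have e3: "e3 x = \<mu> *s x + w x - e1 x - e2 x" for x
    using sum[of x] by (simp add: algebra_simps)
  have "small_rank (\<lambda>v. - w (\<mu> *s v - e1 v - e2 v) - e3 (w v) + d3 *s w v)"
    by (intro small_rank_add small_rank_diff small_rank_neg small_rank_scale
        small_rank_comp_right[OF small_w] small_rank_comp_left[OF lin_e3] small_w)
  then show ?thesis
  proof (rule small_rank_cong)
    fix v
    have "e1 (e2 v) + e2 (e1 v) + (d1 - (2 * \<mu> - d3)) *s e1 v
            + (d2 - (2 * \<mu> - d3)) *s e2 v + (\<mu> * (\<mu> - d3)) *s v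
        = (e3 (e3 v) - d3 *s e3 v) - w (\<mu> *s v - e1 v - e2 v) - e3 (w v) + d3 *s w v"
      by (simp add: e3 linear_endo_simps[OF lin_e1] linear_endo_simps[OF lin_e2]
          linear_endo_simps[OF lin_w] quasi_idem_e1 quasi_idem_e2 algebra_simps)
        (simp only: scale_times_two add.assoc)
    then show "e1 (e2 v) + e2 (e1 v) + (d1 - (2 * \<mu> - d3)) *s e1 v
            + (d2 - (2 * \<mu> - d3)) *s e2 v + (\<mu> * (\<mu> - d3)) *s v
        = - w (\<mu> *s v - e1 v - e2 v) - e3 (w v) + d3 *s w v"
      by (simp add: quasi_idem_e3)
  qed
qed

context
  fixes e1 e2 :: "'v \<Rightarrow> 'v" and d1 d2 :: 'a
  assumes lin_e1: "Vector_Spaces.linear scale scale e1" and lin_e2: "Vector_Spaces.linear scale scale e2"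
    and quasi_idem_e1: "\<And>x. e1 (e1 x) = d1 *s e1 x"
    and quasi_idem_e2: "\<And>x. e2 (e2 x) = d2 *s e2 x"
begin

lemma small_rank_commutator:
  assumes Z: "small_rank (\<lambda>v. e1 (e2 v) + e2 (e1 v) + a *s e1 v + b *s e2 v + P *s v)"
  shows "small_rank (\<lambda>v. (d1 + b) *s (e1 (e2 v) - e2 (e1 v)))"
proof -
  let ?Z = "\<lambda>v. e1 (e2 v) + e2 (e1 v) + a *s e1 v + b *s e2 v + P *s v"
  have "small_rank (\<lambda>v. e1 (?Z v) - ?Z (e1 v))"
    by (rule small_rank_diff[OF small_rank_comp_left[OF lin_e1 Z] small_rank_comp_right[OF Z]])
  then show ?thesis
    by (rule small_rank_cong)
      (simp add: linear_endo_simps[OF lin_e1] linear_endo_simps[OF lin_e2]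
        quasi_idem_e1 quasi_idem_e2 algebra_simps)
qed

text \<open>
  With \<open>R = 2 e\<^sub>1e\<^sub>2 + a e\<^sub>1 + b e\<^sub>2 + P\<close> and \<open>X = 2 e\<^sub>2 + a\<close>, the operator
  \<open>(b e\<^sub>2 + P) R - R (e\<^sub>1 - d\<^sub>1) X - 2 e\<^sub>1 [e\<^sub>1,e\<^sub>2] X\<close> no longer involves \<open>e\<^sub>1\<close>;
  no division by \<open>2\<close> occurs, so any characteristic is allowed.
\<close>
lemma small_rank_eliminate_second:
  assumes Z: "small_rank (\<lambda>v. e1 (e2 v) + e2 (e1 v) + a *s e1 v + b *s e2 v + P *s v)"
    and C: "small_rank (\<lambda>v. e1 (e2 v) - e2 (e1 v))"
  shows "small_rank (\<lambda>v. (b * (d1 + d1 + b) * d2 + b * (d1 * a + P) + P * (d1 + d1 + b)) *s e2 v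
            + (P * (d1 * a + P)) *s v)"
proof -
  define R where "R = (\<lambda>v. e1 (e2 v) + e2 (e1 v) + a *s e1 v + b *s e2 v + P *s v
                            + (e1 (e2 v) - e2 (e1 v)))"
  define R1 where "R1 = (\<lambda>v. (d1 + d1 + b) *s e2 v + (d1 * a + P) *s v)"
  define X where "X = (\<lambda>v. e2 v + e2 v + a *s v)"
  have small_R: "small_rank R" unfolding R_def by (intro small_rank_add Z C)
  have "small_rank (\<lambda>v. (b *s e2 (R v) + P *s R v) - R (e1 (X v) - d1 *s X v)
                         - (e1 (e1 (e2 (X v)) - e2 (e1 (X v))) + e1 (e1 (e2 (X v)) - e2 (e1 (X v)))))"
    by (intro small_rank_add small_rank_diff small_rank_scale small_rank_comp_left[OF lin_e2 small_R]
        small_R small_rank_comp_right[OF small_R] small_rank_comp_left[OF lin_e1]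
        small_rank_comp_right[OF C])
  then have "small_rank (\<lambda>v. b *s e2 (R1 v) + P *s R1 v)"
    by (rule small_rank_cong)
      (simp add: R1_def R_def X_def linear_endo_simps[OF lin_e1] linear_endo_simps[OF lin_e2]
        quasi_idem_e1 quasi_idem_e2 algebra_simps,
       simp only: mult.assoc[symmetric] scale_times_two add_ac)
  then show ?thesis
  proof (rule small_rank_cong)
    fix v
    have "b *s e2 (R1 v) + P *s R1 v
        = (b * (d1 + d1 + b) * d2 + b * (d1 * a + P) + P * (d1 + d1 + b)) *s e2 v
          + (P * (d1 * a + P)) *s v"
      unfolding R1_def
      by (simp add: linear_endo_simps[OF lin_e2] quasi_idem_e2 algebra_simps flip: scale_left_distrib)
    then show "(b * (d1 + d1 + b) * d2 + b * (d1 * a + P) + P * (d1 + d1 + b)) *s e2 v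
          + (P * (d1 * a + P)) *s v = b *s e2 (R1 v) + P *s R1 v" ..
  qed
qed

end

lemma quasi_idempotent_sum_small_rank:
  assumes lin_e1: "Vector_Spaces.linear scale scale e1" and lin_e2: "Vector_Spaces.linear scale scale e2"
    and lin_e3: "Vector_Spaces.linear scale scale e3" and lin_w: "Vector_Spaces.linear scale scale w"
    and quasi_idem_e1: "\<And>x. e1 (e1 x) = d1 *s e1 x"
    and quasi_idem_e2: "\<And>x. e2 (e2 x) = d2 *s e2 x"
    and quasi_idem_e3: "\<And>x. e3 (e3 x) = d3 *s e3 x"
    and sum: "\<And>v. e1 v + e2 v + e3 v = \<mu> *s v + w v" and small_w: "small_rank w"
  shows "2 * \<mu> = d1 + d2 + d3 \<or> (\<exists>x\<in>{0, d1}. \<exists>y\<in>{0, d2}. \<exists>z\<in>{0, d3}. \<mu> = x + y + z)"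
proof (cases "2 * \<mu> = d1 + d2 + d3")
  case False
  define a where "a = d1 - (2 * \<mu> - d3)"
  define b where "b = d2 - (2 * \<mu> - d3)"
  define P where "P = \<mu> * (\<mu> - d3)"
  have Z: "small_rank (\<lambda>v. e1 (e2 v) + e2 (e1 v) + a *s e1 v + b *s e2 v + P *s v)"
    unfolding a_def b_def P_def
    by (rule small_rank_eliminate_third[OF lin_e1 lin_e2 lin_e3 lin_w
          quasi_idem_e1 quasi_idem_e2 quasi_idem_e3 sum small_w])
  have "d1 + b \<noteq> 0" using False unfolding b_def by (auto simp: algebra_simps)
  then have C: "small_rank (\<lambda>v. e1 (e2 v) - e2 (e1 v))"
    using small_rank_scale[OF small_rank_commutator[OF lin_e1 lin_e2 quasi_idem_e1 quasi_idem_e2 Z],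
        of "inverse (d1 + b)"]
    by simp
  have "P * (d1 * a + P) * ((b * (d1 + d1 + b) * d2 + b * (d1 * a + P) + P * (d1 + d1 + b)) * d2
          + P * (d1 * a + P)) = 0"
    by (rule quasi_idempotent_relation_scalar[OF lin_e2 quasi_idem_e2
          small_rank_eliminate_second[OF lin_e1 lin_e2 quasi_idem_e1 quasi_idem_e2 Z C]])
  then show ?thesis
    unfolding a_def b_def P_def by (blast dest: quasi_idempotent_sum_scalar_roots)
qed simp

lemma quadratic_sum_small_rank:
  assumes lin_u1: "Vector_Spaces.linear scale scale u1"
    and lin_u2: "Vector_Spaces.linear scale scale u2"
    and lin_u3: "Vector_Spaces.linear scale scale u3"
    and rel1: "\<And>x. u1 (u1 x) = (\<alpha>1 + \<beta>1) *s u1 x - (\<alpha>1 * \<beta>1) *s x"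
    and rel2: "\<And>x. u2 (u2 x) = (\<alpha>2 + \<beta>2) *s u2 x - (\<alpha>2 * \<beta>2) *s x"
    and rel3: "\<And>x. u3 (u3 x) = (\<alpha>3 + \<beta>3) *s u3 x - (\<alpha>3 * \<beta>3) *s x"
    and small: "small_rank (\<lambda>x. u1 x + u2 x + u3 x - lam *s x)"
  shows "2 * lam = (\<alpha>1 + \<beta>1) + (\<alpha>2 + \<beta>2) + (\<alpha>3 + \<beta>3)
    \<or> (\<exists>x\<in>{\<alpha>1, \<beta>1}. \<exists>y\<in>{\<alpha>2, \<beta>2}. \<exists>z\<in>{\<alpha>3, \<beta>3}. lam = x + y + z)"
proof -
  have lin_sum: "Vector_Spaces.linear scale scale (\<lambda>x. u1 x + u2 x + u3 x)"
    unfolding Vector_Spaces.linear_iff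
    by (simp add: vector_space_axioms linear_endo_simps[OF lin_u1] linear_endo_simps[OF lin_u2]
        linear_endo_simps[OF lin_u3] algebra_simps)
  have "2 * (lam - (\<alpha>1 + \<alpha>2 + \<alpha>3)) = (\<beta>1 - \<alpha>1) + (\<beta>2 - \<alpha>2) + (\<beta>3 - \<alpha>3)
    \<or> (\<exists>x\<in>{0, \<beta>1 - \<alpha>1}. \<exists>y\<in>{0, \<beta>2 - \<alpha>2}. \<exists>z\<in>{0, \<beta>3 - \<alpha>3}.
          lam - (\<alpha>1 + \<alpha>2 + \<alpha>3) = x + y + z)"
    by (rule quasi_idempotent_sum_small_rank[OF linear_minus_scale[OF lin_u1]
          linear_minus_scale[OF lin_u2] linear_minus_scale[OF lin_u3] linear_minus_scale[OF lin_sum]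
          quadratic_relation_shift[OF lin_u1 rel1] quadratic_relation_shift[OF lin_u2 rel2]
          quadratic_relation_shift[OF lin_u3 rel3] _ small])
      (simp add: algebra_simps scale_left_diff_distrib)
  then show ?thesis
  proof (elim disjE bexE)
    fix x y z
    assume "x \<in> {0, \<beta>1 - \<alpha>1}" "y \<in> {0, \<beta>2 - \<alpha>2}" "z \<in> {0, \<beta>3 - \<alpha>3}"
      and "lam - (\<alpha>1 + \<alpha>2 + \<alpha>3) = x + y + z"
    then have "\<alpha>1 + x \<in> {\<alpha>1, \<beta>1} \<and> \<alpha>2 + y \<in> {\<alpha>2, \<beta>2} \<and> \<alpha>3 + z \<in> {\<alpha>3, \<beta>3}
        \<and> lam = (\<alpha>1 + x) + (\<alpha>2 + y) + (\<alpha>3 + z)"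
      by (auto simp: algebra_simps)
    then show ?thesis by blast
  qed (simp add: algebra_simps)
qed

lemma split_quadratic_sum_small_rank:
  assumes "split_poly p1" "degree p1 = 2" "split_poly p2" "degree p2 = 2"
    and "split_poly p3" "degree p3 = 2"
    and lin: "Vector_Spaces.linear scale scale u1" "Vector_Spaces.linear scale scale u2"
      "Vector_Spaces.linear scale scale u3"
    and ann: "annihilates scale p1 u1" "annihilates scale p2 u2" "annihilates scale p3 u3"
    and small: "small_rank (\<lambda>x. u1 x + u2 x + u3 x - lam *s x)"
  shows "scalar_sum3 p1 p2 p3 lam \<or> 2 * lam = tr_poly p1 + tr_poly p2 + tr_poly p3"
proof -
  obtain \<alpha>1 \<beta>1 where roots1: "\<And>x. poly p1 x = 0 \<longleftrightarrow> x = \<alpha>1 \<or> x = \<beta>1"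
    and tr1: "tr_poly p1 = \<alpha>1 + \<beta>1"
    and rel1: "\<And>x. u1 (u1 x) = (\<alpha>1 + \<beta>1) *s u1 x - (\<alpha>1 * \<beta>1) *s x"
    using split_quadratic_annihilator[OF assms(1,2) lin(1) ann(1)] by blast
  obtain \<alpha>2 \<beta>2 where roots2: "\<And>x. poly p2 x = 0 \<longleftrightarrow> x = \<alpha>2 \<or> x = \<beta>2"
    and tr2: "tr_poly p2 = \<alpha>2 + \<beta>2"
    and rel2: "\<And>x. u2 (u2 x) = (\<alpha>2 + \<beta>2) *s u2 x - (\<alpha>2 * \<beta>2) *s x"
    using split_quadratic_annihilator[OF assms(3,4) lin(2) ann(2)] by blast
  obtain \<alpha>3 \<beta>3 where roots3: "\<And>x. poly p3 x = 0 \<longleftrightarrow> x = \<alpha>3 \<or> x = \<beta>3"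
    and tr3: "tr_poly p3 = \<alpha>3 + \<beta>3"
    and rel3: "\<And>x. u3 (u3 x) = (\<alpha>3 + \<beta>3) *s u3 x - (\<alpha>3 * \<beta>3) *s x"
    using split_quadratic_annihilator[OF assms(5,6) lin(3) ann(3)] by blast
  show ?thesis
    using quadratic_sum_small_rank[OF lin rel1 rel2 rel3 small]
    unfolding scalar_sum3_def tr1 tr2 tr3 using roots1 roots2 roots3 by auto
qed

end

lemma dominant_eigenvalue_small_rank:
  assumes "vector_space scale" "infinite_dimensional scale" "dominant_eigenvalue scale u lam"
  obtains B0 where "vector_space_infinite_basis scale B0"
    "vector_space_infinite_basis.small_rank scale B0 (\<lambda>x. u x - scale lam x)"
proof -
  from assms(3) obtain B C where B: "is_basis_of scale UNIV B"
    and C: "is_basis_of scale (range (\<lambda>x. u x - scale lam x)) C" and "|C| <o |B|"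
    unfolding dominant_eigenvalue_def by blast
  interpret vector_space scale by fact
  interpret vector_space_infinite_basis scale B
    using assms(2) B unfolding is_basis_of_def infinite_dimensional_def
    by unfold_locales auto
  have "small_rank (\<lambda>x. u x - scale lam x)"
    unfolding small_rank_def using C \<open>|C| <o |B|\<close> unfolding is_basis_of_def by blast
  then show ?thesis using that vector_space_infinite_basis_axioms by blast
qed

theorem theorem3:
  fixes scale :: "'a::field \<Rightarrow> 'v::ab_group_add \<Rightarrow> 'v"
    and p1 p2 p3 :: "'a poly" and u :: "'v \<Rightarrow> 'v" and lam :: 'a
  assumes "vector_space scale"
    and "infinite_dimensional scale"
    and "split_poly p1" "degree p1 = 2"
    and "split_poly p2" "degree p2 = 2"
    and "split_poly p3" "degree p3 = 2"
    and "Vector_Spaces.linear scale scale u"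
    and "dominant_eigenvalue scale u lam"
    and "is_sum3 scale p1 p2 p3 u"
  shows "scalar_sum3 p1 p2 p3 lam \<or> 2 * lam = tr_poly p1 + tr_poly p2 + tr_poly p3"
proof -
  interpret vector_space scale by fact
  obtain B0 where "vector_space_infinite_basis scale B0"
    and small: "vector_space_infinite_basis.small_rank scale B0 (\<lambda>x. u x - scale lam x)"
    using dominant_eigenvalue_small_rank[OF assms(1,2,10)] .
  then interpret vector_space_infinite_basis scale B0 by simp
  obtain u1 u2 u3 where lin: "Vector_Spaces.linear scale scale u1" "Vector_Spaces.linear scale scale u2"
      "Vector_Spaces.linear scale scale u3"
    and ann: "annihilates scale p1 u1" "annihilates scale p2 u2" "annihilates scale p3 u3"
    and u: "\<And>x. u x = u1 x + u2 x + u3 x"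
    using assms(11) unfolding is_sum3_def by blast
  with small show ?thesis
    using split_quadratic_sum_small_rank[OF assms(3-8) lin ann] by simp
qed

end
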